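(* Let $\sigma\in\mathbb Z_{\ge1}$. The normalizer $\mathrm{Norm}_P(\Lambda_\sigma)=\{p\in NAM:p\Lambda_\sigma p^{-1}=\Lambda_\sigma\}$ is the semi-direct product of the groups $\mathrm{Norm}_N(\Lambda_\sigma)=\{n(\beta/\sigma,\rho):\beta\in\mathbb Z[i],\rho\in\mathbb R\}$ and $\mathrm{Norm}_M(\Lambda_\sigma)=\{m(\zeta)\in M:\zeta^{12}=1\}$.
   Context: $G=\mathrm{SU}(2,1)=\{g\in\mathrm{SL}_3(\mathbb C):\bar g^t\,\mathrm{diag}(1,1,-1)\,g=\mathrm{diag}(1,1,-1)\}$ with subgroups $N=\{n(b,r)=\begin{pmatrix}1+ir-\frac{|b|^2}2&b&-ir+\frac{|b|^2}2\\-\bar b&1&\bar b\\ ir-\frac{|b|^2}2&b&1-ir+\frac{|b|^2}2\end{pmatrix}:b\in\mathbb C,r\in\mathbb R\}$, $A=\{a(t)=\begin{pmatrix}\frac{t+t^{-1}}2&0&\frac{t-t^{-1}}2\\0&1&0\\\frac{t-t^{-1}}2&0&\frac{t+t^{-1}}2\end{pmatrix}:t>0\}$, $M=\{m(\zeta)=\mathrm{diag}(\zeta,\zeta^{-2},\zeta):|\zeta|=1\}$. Write $n(x,y,r)=n(x+iy,r)$. $\Lambda_\sigma$ is the lattice in $N$ generated by $n(1,0,0)$, $n(0,1,0)$, $n(0,0,2/\sigma)$. *)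

theory Defs
  imports "HOL-Analysis.Analysis"
begin

text \<open>3x3 complex matrices, rows/columns indexed by the type 3 (indices 1,2,3).\<close>

definition mat3 :: "complex \<Rightarrow> complex \<Rightarrow> complex \<Rightarrow> complex \<Rightarrow> complex \<Rightarrow> complex
    \<Rightarrow> complex \<Rightarrow> complex \<Rightarrow> complex \<Rightarrow> complex^3^3" where
  "mat3 a11 a12 a13 a21 a22 a23 a31 a32 a33 =
     (\<chi> i j. if i = 1 then (if j = 1 then a11 else if j = 2 then a12 else a13)
             else if i = 2 then (if j = 1 then a21 else if j = 2 then a22 else a23)
             else (if j = 1 then a31 else if j = 2 then a32 else a33))"

definition nmat :: "complex \<Rightarrow> real \<Rightarrow> complex^3^3" where
  "nmat b r = mat3
     (1 + \<i> * r - (cmod b)^2 / 2)  b  (- \<i> * r + (cmod b)^2 / 2)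
     (- cnj b)  1  (cnj b)
     (\<i> * r - (cmod b)^2 / 2)  b  (1 - \<i> * r + (cmod b)^2 / 2)"

definition nxyr :: "real \<Rightarrow> real \<Rightarrow> real \<Rightarrow> complex^3^3" where
  "nxyr x y r = nmat (Complex x y) r"

definition amat :: "real \<Rightarrow> complex^3^3" where
  "amat t = mat3 ((t + 1/t)/2) 0 ((t - 1/t)/2)
                 0 1 0
                 ((t - 1/t)/2) 0 ((t + 1/t)/2)"

definition mmat :: "complex \<Rightarrow> complex^3^3" where
  "mmat z = mat3 z 0 0  0 (inverse (z^2)) 0  0 0 z"

definition Ngrp :: "(complex^3^3) set" where
  "Ngrp = {nmat b r | b r. True}"

definition Agrp :: "(complex^3^3) set" where
  "Agrp = {amat t | t. t > 0}"

definition Mgrp :: "(complex^3^3) set" where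
  "Mgrp = {mmat z | z. cmod z = 1}"

definition Pgrp :: "(complex^3^3) set" where
  "Pgrp = {n ** a ** m | n a m. n \<in> Ngrp \<and> a \<in> Agrp \<and> m \<in> Mgrp}"

inductive_set gen_subgroup :: "(complex^3^3) set \<Rightarrow> (complex^3^3) set" for S where
  gen_one: "mat 1 \<in> gen_subgroup S"
| gen_base: "g \<in> S \<Longrightarrow> g \<in> gen_subgroup S"
| gen_mult: "g \<in> gen_subgroup S \<Longrightarrow> h \<in> gen_subgroup S \<Longrightarrow> g ** h \<in> gen_subgroup S"
| gen_inv: "g \<in> gen_subgroup S \<Longrightarrow> matrix_inv g \<in> gen_subgroup S"

definition Lambda :: "nat \<Rightarrow> (complex^3^3) set" where
  "Lambda \<sigma> = gen_subgroup {nxyr 1 0 0, nxyr 0 1 0, nxyr 0 0 (2 / real \<sigma>)}"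

definition normalizer_in :: "(complex^3^3) set \<Rightarrow> (complex^3^3) set \<Rightarrow> (complex^3^3) set" where
  "normalizer_in H L = {p \<in> H. (\<lambda>x. p ** x ** matrix_inv p) ` L = L}"

definition gauss_ints :: "complex set" where
  "gauss_ints = {Complex (of_int a) (of_int b) | a b. True}"

end

theory Submission
  imports Defs
begin

text \<open>
  Conjugation by \<open>p = n(b,\<rho>) a(t) m(\<zeta>)\<close> acts on \<open>N\<close> by
  \<open>n(\<beta>,r) \<mapsto> n(u\<beta>, t\<^sup>2 r + 2 Im (cnj b u\<beta>))\<close> with \<open>u = t\<zeta>\<^sup>3\<close>, and \<open>\<Lambda>\<^sub>\<sigma>\<close>
  consists of the \<open>n(\<beta>,r)\<close> with \<open>\<beta> \<in> \<int>[i]\<close> and \<open>\<sigma>(r - Re \<beta> Im \<beta>)/2 \<in> \<int>\<close>.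
  If \<open>p\<close> normalizes \<open>\<Lambda>\<^sub>\<sigma>\<close>, multiplication by \<open>u\<close> maps \<open>\<int>[i]\<close> onto itself, so \<open>u\<close>
  is a Gaussian unit: \<open>t = |u| = 1\<close> and \<open>\<zeta>\<^sup>1\<^sup>2 = u\<^sup>4 = 1\<close>. Conversely these \<open>m(\<zeta>)\<close>
  normalize \<open>\<Lambda>\<^sub>\<sigma>\<close>, since multiplying \<open>\<beta>\<close> by a fourth root of unity changes
  \<open>Re \<beta> Im \<beta>\<close> at most by its sign and \<open>\<sigma> Re \<beta> Im \<beta> \<in> \<int>\<close>. For \<open>n(b,\<rho>)\<close> the
  condition is \<open>\<sigma> Im (cnj b \<beta>) \<in> \<int>\<close> for all \<open>\<beta> \<in> \<int>[i]\<close>, i.e. \<open>\<sigma> b \<in> \<int>[i]\<close>.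
  The rest is group theory: normalizers are closed under products and inverses, and \<open>N\<close> is
  normal in \<open>P\<close>.
\<close>

section \<open>Inverses and normalizers of square matrices\<close>

lemma matrix_inv_unique:
  fixes A B :: "'a::semiring_1^'n^'n"
  assumes "A ** B = mat 1" "B ** A = mat 1"
  shows "matrix_inv A = B"
proof -
  have inv: "A ** matrix_inv A = mat 1 \<and> matrix_inv A ** A = mat 1"
    unfolding matrix_inv_def by (rule someI[of _ B]) (use assms in simp)
  have "matrix_inv A = matrix_inv A ** (A ** B)"
    by (simp add: assms(1) matrix_mul_rid)
  also have "\<dots> = (matrix_inv A ** A) ** B"
    by (simp add: matrix_mul_assoc)
  finally show ?thesis
    using inv by (simp add: matrix_mul_lid)
qed

lemma invertible_of_inverse:
  fixes A B :: "'a::semiring_1^'n^'n"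
  assumes "A ** B = mat 1" "B ** A = mat 1"
  shows "invertible A" and "matrix_inv A = B"
  using assms matrix_inv_unique unfolding invertible_def by blast+

lemma matrix_inv_right:
  fixes A :: "'a::semiring_1^'n^'n"
  assumes "invertible A"
  shows "A ** matrix_inv A = mat 1"
  using assms unfolding invertible_def by (metis matrix_inv_unique)

lemma matrix_inv_left:
  fixes A :: "'a::semiring_1^'n^'n"
  assumes "invertible A"
  shows "matrix_inv A ** A = mat 1"
  using assms unfolding invertible_def by (metis matrix_inv_unique)

lemma invertible_matrix_inv:
  fixes A :: "'a::semiring_1^'n^'n"
  assumes "invertible A"
  shows "invertible (matrix_inv A)"
  using assms matrix_inv_left matrix_inv_right invertible_def by blast

lemma matrix_inv_matrix_inv:
  fixes A :: "'a::semiring_1^'n^'n"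
  assumes "invertible A"
  shows "matrix_inv (matrix_inv A) = A"
  by (rule matrix_inv_unique) (simp_all add: assms matrix_inv_left matrix_inv_right)

lemma matrix_inv_mult:
  fixes A B :: "'a::semiring_1^'n^'n"
  assumes "invertible A" "invertible B"
  shows "matrix_inv (A ** B) = matrix_inv B ** matrix_inv A"
proof (rule matrix_inv_unique)
  show "A ** B ** (matrix_inv B ** matrix_inv A) = mat 1"
    by (metis assms matrix_inv_right matrix_mul_assoc matrix_mul_rid)
  show "matrix_inv B ** matrix_inv A ** (A ** B) = mat 1"
    by (metis assms matrix_inv_left matrix_mul_assoc matrix_mul_rid)
qed

lemma conj_matrix_mult:
  fixes A B X :: "'a::semiring_1^'n^'n"
  assumes "invertible A" "invertible B"
  shows "(A ** B) ** X ** matrix_inv (A ** B) = A ** (B ** X ** matrix_inv B) ** matrix_inv A"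
  by (simp add: matrix_inv_mult assms matrix_mul_assoc)

lemma conj_matrix_inv_cancel:
  fixes A X :: "'a::semiring_1^'n^'n"
  assumes "invertible A"
  shows "matrix_inv A ** (A ** X ** matrix_inv A) ** A = X"
proof -
  have "matrix_inv A ** (A ** X ** matrix_inv A) ** A = (matrix_inv A ** A) ** X ** (matrix_inv A ** A)"
    by (simp add: matrix_mul_assoc)
  then show ?thesis
    by (simp add: assms matrix_inv_left matrix_mul_lid matrix_mul_rid)
qed

definition normalizes :: "('a::semiring_1^'n^'n) set \<Rightarrow> 'a^'n^'n \<Rightarrow> bool" where
  "normalizes L g \<longleftrightarrow> (\<lambda>x. g ** x ** matrix_inv g) ` L = L"

lemma normalizer_in_iff: "p \<in> normalizer_in H L \<longleftrightarrow> p \<in> H \<and> normalizes L p"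
  unfolding normalizer_in_def normalizes_def by simp

lemma normalizes_one: "normalizes L (mat 1 :: 'a::semiring_1^'n^'n)"
proof -
  have "matrix_inv (mat 1 :: 'a^'n^'n) = mat 1"
    by (rule matrix_inv_unique) (simp_all add: matrix_mul_lid)
  then show ?thesis
    unfolding normalizes_def by (simp add: matrix_mul_lid matrix_mul_rid)
qed

lemma normalizer_in_Int: "normalizer_in H L \<inter> normalizer_in K L = normalizer_in (H \<inter> K) L"
  by (auto simp: normalizer_in_iff)

lemma normalizer_in_one: "normalizer_in {mat 1} L = {mat 1}"
  by (auto simp: normalizer_in_iff normalizes_one)

lemma normalizes_mult:
  fixes A B :: "'a::semiring_1^'n^'n"
  assumes "invertible A" "invertible B" "normalizes L A" "normalizes L B"
  shows "normalizes L (A ** B)"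
proof -
  have conj: "(\<lambda>x. (A ** B) ** x ** matrix_inv (A ** B))
      = (\<lambda>y. A ** y ** matrix_inv A) \<circ> (\<lambda>x. B ** x ** matrix_inv B)"
    by (simp add: conj_matrix_mult assms(1,2) comp_def)
  show ?thesis
    using assms(3,4) unfolding normalizes_def conj by (metis image_comp)
qed

lemma normalizes_matrix_inv:
  fixes A :: "'a::semiring_1^'n^'n"
  assumes "invertible A" "normalizes L A"
  shows "normalizes L (matrix_inv A)"
proof -
  have "(\<lambda>y. matrix_inv A ** y ** A) ` ((\<lambda>x. A ** x ** matrix_inv A) ` L) = L"
    by (simp add: image_image conj_matrix_inv_cancel assms(1))
  then show ?thesis
    using assms unfolding normalizes_def by (simp add: matrix_inv_matrix_inv)
qed

lemma normalizes_iff: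
  fixes A :: "'a::semiring_1^'n^'n"
  assumes "invertible A"
  shows "normalizes L A \<longleftrightarrow>
    (\<forall>x\<in>L. A ** x ** matrix_inv A \<in> L) \<and> (\<forall>x\<in>L. matrix_inv A ** x ** A \<in> L)"
proof
  assume "normalizes L A"
  then have "normalizes L (matrix_inv A)"
    by (rule normalizes_matrix_inv[OF assms])
  with \<open>normalizes L A\<close> show "(\<forall>x\<in>L. A ** x ** matrix_inv A \<in> L) \<and> (\<forall>x\<in>L. matrix_inv A ** x ** A \<in> L)"
    unfolding normalizes_def by (auto simp: matrix_inv_matrix_inv assms)
next
  assume maps: "(\<forall>x\<in>L. A ** x ** matrix_inv A \<in> L) \<and> (\<forall>x\<in>L. matrix_inv A ** x ** A \<in> L)"
  have "x \<in> (\<lambda>x. A ** x ** matrix_inv A) ` L" if "x \<in> L" for x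
  proof
    have "A ** (matrix_inv A ** x ** A) ** matrix_inv A = x"
      using conj_matrix_inv_cancel[OF invertible_matrix_inv[OF assms], of x]
      by (simp add: matrix_inv_matrix_inv assms)
    then show "x = A ** (matrix_inv A ** x ** A) ** matrix_inv A" ..
    show "matrix_inv A ** x ** A \<in> L" using maps that by blast
  qed
  with maps show "normalizes L A"
    unfolding normalizes_def by blast
qed

section \<open>The groups \<open>N\<close>, \<open>A\<close>, \<open>M\<close> and \<open>P = NAM\<close>\<close>

lemma mat3_eq_iff:
  "mat3 a11 a12 a13 a21 a22 a23 a31 a32 a33 = mat3 b11 b12 b13 b21 b22 b23 b31 b32 b33 \<longleftrightarrow>
    a11 = b11 \<and> a12 = b12 \<and> a13 = b13 \<and> a21 = b21 \<and> a22 = b22 \<and> a23 = b23 \<and>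
    a31 = b31 \<and> a32 = b32 \<and> a33 = b33"
  unfolding mat3_def vec_eq_iff forall_3 by simp

lemma mat3_mult:
  "mat3 a11 a12 a13 a21 a22 a23 a31 a32 a33 ** mat3 b11 b12 b13 b21 b22 b23 b31 b32 b33
   = mat3 (a11*b11 + a12*b21 + a13*b31) (a11*b12 + a12*b22 + a13*b32) (a11*b13 + a12*b23 + a13*b33)
          (a21*b11 + a22*b21 + a23*b31) (a21*b12 + a22*b22 + a23*b32) (a21*b13 + a22*b23 + a23*b33)
          (a31*b11 + a32*b21 + a33*b31) (a31*b12 + a32*b22 + a33*b32) (a31*b13 + a32*b23 + a33*b33)"
  unfolding mat3_def matrix_matrix_mult_def vec_eq_iff forall_3 sum_3 by simp

lemma mat3_one: "mat 1 = mat3 1 0 0 0 1 0 0 0 1"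
  unfolding mat3_def mat_def vec_eq_iff forall_3 by simp

lemma nmat_mult: "nmat b r ** nmat b' r' = nmat (b + b') (r + r' + Im (cnj b * b'))"
proof -
  have norm_sq: "cmod z * cmod z = Re z * Re z + Im z * Im z" for z
    by (metis cmod_power2 power2_eq_square)
  show ?thesis
    unfolding nmat_def mat3_mult mat3_eq_iff
    by (simp add: complex_eq_iff power2_eq_square norm_sq field_simps)
qed

lemma nmat_zero: "nmat 0 0 = mat 1"
  unfolding nmat_def mat3_one mat3_eq_iff by simp

lemma nmat_eq_iff: "nmat b r = nmat b' r' \<longleftrightarrow> b = b' \<and> r = r'"
  unfolding nmat_def mat3_eq_iff by (auto simp: complex_eq_iff cmod_def)

lemma
  shows invertible_nmat: "invertible (nmat b r)"
    and matrix_inv_nmat: "matrix_inv (nmat b r) = nmat (- b) (- r)"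
  using invertible_of_inverse[of "nmat b r" "nmat (- b) (- r)"] by (simp_all add: nmat_mult nmat_zero)

lemma amat_mult_amat_inverse: "t > 0 \<Longrightarrow> amat t ** amat (1 / t) = mat 1"
  unfolding amat_def mat3_one mat3_mult mat3_eq_iff
  by (simp add: complex_eq_iff power2_eq_square field_simps)

lemma
  assumes "t > 0"
  shows invertible_amat: "invertible (amat t)"
    and matrix_inv_amat: "matrix_inv (amat t) = amat (1 / t)"
  using amat_mult_amat_inverse[of t] amat_mult_amat_inverse[of "1 / t"] assms
  by (simp_all add: invertible_of_inverse)

lemma amat_one: "amat 1 = mat 1"
  unfolding amat_def mat3_one mat3_eq_iff by simp

lemma mmat_mult_mmat_inverse: "z \<noteq> 0 \<Longrightarrow> mmat z ** mmat (1 / z) = mat 1"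
  unfolding mmat_def mat3_one mat3_mult mat3_eq_iff by (simp add: field_simps)

lemma
  assumes "z \<noteq> 0"
  shows invertible_mmat: "invertible (mmat z)"
    and matrix_inv_mmat: "matrix_inv (mmat z) = mmat (1 / z)"
  using mmat_mult_mmat_inverse[of z] mmat_mult_mmat_inverse[of "1 / z"] assms
  by (simp_all add: invertible_of_inverse)

lemma mmat_one: "mmat 1 = mat 1"
  unfolding mmat_def mat3_one mat3_eq_iff by simp

lemma nmat_conj_nmat:
  "nmat b \<rho> ** nmat \<beta> r ** matrix_inv (nmat b \<rho>) = nmat \<beta> (r + 2 * Im (cnj b * \<beta>))"
  by (simp add: matrix_inv_nmat nmat_mult algebra_simps)

lemma amat_conj_nmat:
  assumes "t > 0"
  shows "amat t ** nmat \<beta> r ** matrix_inv (amat t) = nmat (of_real t * \<beta>) (t\<^sup>2 * r)"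
proof -
  have "cmod (of_real t * \<beta>) = t * cmod \<beta>"
    using assms by (simp add: norm_mult)
  with assms show ?thesis
    unfolding matrix_inv_amat[OF assms] unfolding amat_def nmat_def mat3_mult
    by (simp only: mat3_eq_iff) (simp add: field_simps power2_eq_square)
qed

lemma mmat_conj_nmat:
  assumes "cmod z = 1"
  shows "mmat z ** nmat \<beta> r ** matrix_inv (mmat z) = nmat (z ^ 3 * \<beta>) r"
proof -
  have "z \<noteq> 0"
    using assms by auto
  have "cnj z = 1 / z"
    using complex_norm_square[of z] assms \<open>z \<noteq> 0\<close> by (simp add: field_simps)
  then have "cnj (z ^ 3 * \<beta>) = cnj \<beta> / z ^ 3"
    by (simp add: field_simps)
  moreover have "cmod (z ^ 3 * \<beta>) = cmod \<beta>"
    using assms by (simp add: norm_mult norm_power)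
  ultimately show ?thesis
    unfolding matrix_inv_mmat[OF \<open>z \<noteq> 0\<close>] unfolding mmat_def nmat_def mat3_mult
    using \<open>z \<noteq> 0\<close> by (simp only: mat3_eq_iff) (simp add: field_simps power2_eq_square power3_eq_cube)
qed

lemma nam_conj_nmat:
  assumes "t > 0" "cmod z = 1"
  shows "(nmat b \<rho> ** amat t ** mmat z) ** nmat \<beta> r ** matrix_inv (nmat b \<rho> ** amat t ** mmat z)
    = nmat (of_real t * z ^ 3 * \<beta>) (t\<^sup>2 * r + 2 * Im (cnj b * (of_real t * z ^ 3 * \<beta>)))"
proof -
  have "z \<noteq> 0"
    using assms(2) by auto
  then show ?thesis
    using assms
    by (simp add: conj_matrix_mult invertible_mult invertible_nmat invertible_amat invertible_mmat
        mmat_conj_nmat amat_conj_nmat nmat_conj_nmat mult.assoc)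
qed

lemma invertible_Pgrp: "p \<in> Pgrp \<Longrightarrow> invertible p"
  unfolding Pgrp_def Ngrp_def Agrp_def Mgrp_def
  by (auto intro!: invertible_mult invertible_nmat invertible_amat invertible_mmat)

lemma Ngrp_subset_Pgrp: "Ngrp \<subseteq> Pgrp"
proof
  fix x assume "x \<in> Ngrp"
  then obtain b r where "x = nmat b r ** amat 1 ** mmat 1"
    unfolding Ngrp_def by (auto simp: amat_one mmat_one matrix_mul_rid)
  then show "x \<in> Pgrp"
    unfolding Pgrp_def Ngrp_def Agrp_def Mgrp_def by fastforce
qed

lemma Mgrp_subset_Pgrp: "Mgrp \<subseteq> Pgrp"
proof
  fix x assume "x \<in> Mgrp"
  then obtain z where "x = nmat 0 0 ** amat 1 ** mmat z" "cmod z = 1"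
    unfolding Mgrp_def by (auto simp: amat_one nmat_zero matrix_mul_lid)
  then show "x \<in> Pgrp"
    unfolding Pgrp_def Ngrp_def Agrp_def Mgrp_def by fastforce
qed

lemma Ngrp_Int_Mgrp: "Ngrp \<inter> Mgrp = {mat 1}"
proof
  show "Ngrp \<inter> Mgrp \<subseteq> {mat 1}"
  proof
    fix x assume "x \<in> Ngrp \<inter> Mgrp"
    then obtain b r z where x: "x = nmat b r" "x = mmat z"
      unfolding Ngrp_def Mgrp_def by blast
    then have eq: "nmat b r = mmat z"
      by simp
    then have "b = 0"
      unfolding nmat_def mmat_def mat3_eq_iff by simp
    with eq have "r = 0"
      unfolding nmat_def mmat_def mat3_eq_iff by (simp add: complex_eq_iff)
    with \<open>b = 0\<close> show "x \<in> {mat 1}"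
      using x by (simp add: nmat_zero)
  qed
  have "nmat 0 0 \<in> Ngrp" "mmat 1 \<in> Mgrp"
    unfolding Ngrp_def Mgrp_def by auto
  then show "{mat 1} \<subseteq> Ngrp \<inter> Mgrp"
    by (simp add: nmat_zero mmat_one)
qed

lemma Pgrp_conj_Ngrp:
  assumes "p \<in> Pgrp" "x \<in> Ngrp"
  shows "p ** x ** matrix_inv p \<in> Ngrp"
proof -
  obtain b \<rho> t z where "p = nmat b \<rho> ** amat t ** mmat z" "t > 0" "cmod z = 1"
    using assms(1) unfolding Pgrp_def Ngrp_def Agrp_def Mgrp_def by blast
  moreover obtain \<beta> r where "x = nmat \<beta> r"
    using assms(2) unfolding Ngrp_def by blast
  ultimately show ?thesis
    unfolding Ngrp_def by (auto simp: nam_conj_nmat)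
qed

lemma normalizer_in_Ngrp_conj:
  assumes "p \<in> normalizer_in Pgrp L" "x \<in> normalizer_in Ngrp L"
  shows "p ** x ** matrix_inv p \<in> normalizer_in Ngrp L"
proof -
  have "invertible p" "invertible x"
    using assms Ngrp_subset_Pgrp invertible_Pgrp by (auto simp: normalizer_in_iff)
  with assms show ?thesis
    by (auto simp: normalizer_in_iff Pgrp_conj_Ngrp
        intro!: normalizes_mult normalizes_matrix_inv invertible_mult invertible_matrix_inv)
qed

section \<open>Gaussian integers\<close>

lemma gauss_ints_iff: "z \<in> gauss_ints \<longleftrightarrow> Re z \<in> \<int> \<and> Im z \<in> \<int>"
  unfolding gauss_ints_def by (auto simp: complex_eq_iff elim!: Ints_cases)

lemma int_sum_squares_eq_1:
  fixes a c :: int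
  assumes "a\<^sup>2 + c\<^sup>2 = 1"
  shows "(a, c) \<in> {(1, 0), (-1, 0), (0, 1), (0, -1)}"
proof -
  have "a\<^sup>2 \<le> 1" "c\<^sup>2 \<le> 1"
    using assms by (smt (verit) zero_le_power2)+
  then have "a \<in> {-1, 0, 1}" "c \<in> {-1, 0, 1}"
    by (auto simp: abs_square_le_1)
  with assms show ?thesis
    by auto
qed

lemma complex_fourth_roots_of_unity: "u ^ 4 = 1 \<longleftrightarrow> u \<in> {1, -1, \<i>, -\<i> :: complex}"
proof
  assume "u ^ 4 = 1"
  have "(u - 1) * (u + 1) * (u - \<i>) * (u + \<i>) = u ^ 4 - 1"
    by (simp add: algebra_simps power_numeral_reduce)
  with \<open>u ^ 4 = 1\<close> show "u \<in> {1, -1, \<i>, -\<i>}"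
    by (auto simp: add_eq_0_iff2)
next
  assume "u \<in> {1, -1, \<i>, -\<i>}"
  then show "u ^ 4 = 1"
    by (auto simp: power_numeral_reduce)
qed

lemma gauss_int_unit_fourth_root:
  assumes "u \<in> gauss_ints" "v \<in> gauss_ints" "u * v = 1"
  shows "u ^ 4 = 1"
proof -
  obtain a c a' c' :: int where u: "u = Complex a c" and v: "v = Complex a' c'"
    using assms(1,2) unfolding gauss_ints_def by blast
  have "(cmod u)\<^sup>2 * (cmod v)\<^sup>2 = 1"
    using assms(3) by (metis norm_mult norm_one power_mult_distrib power_one)
  then have "real_of_int ((a\<^sup>2 + c\<^sup>2) * (a'\<^sup>2 + c'\<^sup>2)) = 1"
    unfolding u v cmod_power2 by simp
  then have "(a\<^sup>2 + c\<^sup>2) * (a'\<^sup>2 + c'\<^sup>2) = 1"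
    by linarith
  moreover have "a\<^sup>2 + c\<^sup>2 \<ge> 0"
    by simp
  ultimately have "a\<^sup>2 + c\<^sup>2 = 1"
    unfolding zmult_eq_1_iff by linarith
  then have "(a, c) \<in> {(1, 0), (-1, 0), (0, 1), (0, -1)}"
    by (rule int_sum_squares_eq_1)
  then show ?thesis
    unfolding u complex_fourth_roots_of_unity by (auto simp: complex_eq_iff)
qed

section \<open>The lattice \<open>\<Lambda>\<^sub>\<sigma>\<close>\<close>

text \<open>\<open>Re \<beta> * Im \<beta>\<close> is the \<open>r\<close>-coordinate of \<open>n(Re \<beta>, 0) n(\<i> Im \<beta>, 0)\<close>; the third
  generator \<open>n(0, 2/\<sigma>)\<close> is central.\<close>

definition lattice_coords :: "nat \<Rightarrow> complex \<Rightarrow> real \<Rightarrow> bool" where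
  "lattice_coords \<sigma> \<beta> r \<longleftrightarrow> \<beta> \<in> gauss_ints \<and> real \<sigma> * (r - Re \<beta> * Im \<beta>) / 2 \<in> \<int>"

lemma lattice_coords_mult:
  assumes "lattice_coords \<sigma> \<beta> r" "lattice_coords \<sigma> \<beta>' r'"
  shows "lattice_coords \<sigma> (\<beta> + \<beta>') (r + r' + Im (cnj \<beta> * \<beta>'))"
proof -
  have "real \<sigma> * (r + r' + Im (cnj \<beta> * \<beta>') - Re (\<beta> + \<beta>') * Im (\<beta> + \<beta>')) / 2
      = real \<sigma> * (r - Re \<beta> * Im \<beta>) / 2 + real \<sigma> * (r' - Re \<beta>' * Im \<beta>') / 2 - real \<sigma> * Re \<beta>' * Im \<beta>"
    by (simp add: field_simps)
  also have "\<dots> \<in> \<int>"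
    using assms unfolding lattice_coords_def gauss_ints_iff
    by (intro Ints_add Ints_diff Ints_mult Ints_of_nat) auto
  finally show ?thesis
    using assms unfolding lattice_coords_def gauss_ints_iff by simp
qed

lemma lattice_coords_uminus:
  assumes "lattice_coords \<sigma> \<beta> r"
  shows "lattice_coords \<sigma> (- \<beta>) (- r)"
proof -
  have "real \<sigma> * (- r - Re (- \<beta>) * Im (- \<beta>)) / 2
      = - (real \<sigma> * (r - Re \<beta> * Im \<beta>) / 2) - real \<sigma> * Re \<beta> * Im \<beta>"
    by (simp add: field_simps)
  also have "\<dots> \<in> \<int>"
    using assms unfolding lattice_coords_def gauss_ints_iff
    by (intro Ints_minus Ints_diff Ints_mult Ints_of_nat) auto
  finally show ?thesis
    using assms unfolding lattice_coords_def gauss_ints_iff by simp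
qed

lemma nmat_int_multiple_in_gen_subgroup:
  assumes "nmat b r \<in> gen_subgroup S"
  shows "nmat (of_int k * b) (of_int k * r) \<in> gen_subgroup S"
proof (induction k rule: int_induct[where k = 0])
  case base
  show ?case
    using gen_subgroup.gen_one by (simp add: nmat_zero)
next
  case (step1 i)
  have "nmat (of_int (i + 1) * b) (of_int (i + 1) * r) = nmat (of_int i * b) (of_int i * r) ** nmat b r"
    by (simp add: nmat_mult algebra_simps)
  with step1.IH assms show ?case
    by (simp add: gen_subgroup.gen_mult)
next
  case (step2 i)
  have "nmat (of_int (i - 1) * b) (of_int (i - 1) * r) = nmat (of_int i * b) (of_int i * r) ** matrix_inv (nmat b r)"
    by (simp add: matrix_inv_nmat nmat_mult algebra_simps)
  with step2.IH assms show ?case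
    by (simp add: gen_subgroup.gen_mult gen_subgroup.gen_inv)
qed

lemma nxyr_generators: "nxyr 1 0 0 = nmat 1 0" "nxyr 0 1 0 = nmat \<i> 0" "nxyr 0 0 r = nmat 0 r"
  unfolding nxyr_def nmat_eq_iff by (simp_all add: complex_eq_iff)

lemma Lambda_subset_lattice_coords: "Lambda \<sigma> \<subseteq> {nmat \<beta> r | \<beta> r. lattice_coords \<sigma> \<beta> r}"
proof
  fix x assume "x \<in> Lambda \<sigma>"
  then show "x \<in> {nmat \<beta> r | \<beta> r. lattice_coords \<sigma> \<beta> r}"
    unfolding Lambda_def
  proof (induction rule: gen_subgroup.induct)
    case gen_one
    have "lattice_coords \<sigma> 0 0"
      unfolding lattice_coords_def gauss_ints_iff by simp
    then show ?case
      using nmat_zero by force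
  next
    case (gen_base g)
    have "real \<sigma> * (2 / real \<sigma>) / 2 \<in> \<int>"
      by (cases "\<sigma> = 0") simp_all
    then have "lattice_coords \<sigma> 1 0" "lattice_coords \<sigma> \<i> 0" "lattice_coords \<sigma> 0 (2 / real \<sigma>)"
      unfolding lattice_coords_def gauss_ints_iff by simp_all
    with gen_base show ?case
      unfolding nxyr_generators by blast
  next
    case (gen_mult g h)
    then show ?case
      using lattice_coords_mult by (force simp: nmat_mult)
  next
    case (gen_inv g)
    then show ?case
      using lattice_coords_uminus by (force simp: matrix_inv_nmat)
  qed
qed

lemma lattice_coords_in_Lambda:
  assumes "\<sigma> > 0" "lattice_coords \<sigma> \<beta> r"
  shows "nmat \<beta> r \<in> Lambda \<sigma>"
proof -
  obtain a c k :: int where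
    a: "Re \<beta> = a" and c: "Im \<beta> = c" and k: "real \<sigma> * (r - Re \<beta> * Im \<beta>) / 2 = k"
    using assms(2) unfolding lattice_coords_def gauss_ints_iff by (auto elim!: Ints_cases)
  have gens: "nmat 1 0 \<in> Lambda \<sigma>" "nmat \<i> 0 \<in> Lambda \<sigma>" "nmat 0 (2 / real \<sigma>) \<in> Lambda \<sigma>"
    unfolding Lambda_def by (auto intro: gen_subgroup.gen_base simp flip: nxyr_generators)
  have "nmat \<beta> r = nmat (of_int a * 1) (of_int a * 0) ** nmat (of_int c * \<i>) (of_int c * 0)
      ** nmat (of_int k * 0) (of_int k * (2 / real \<sigma>))"
    using a c k assms(1) by (simp add: nmat_mult nmat_eq_iff complex_eq_iff field_simps)
  then show ?thesis
    using gens unfolding Lambda_def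
    by (metis gen_subgroup.gen_mult nmat_int_multiple_in_gen_subgroup)
qed

lemma Lambda_eq:
  assumes "\<sigma> > 0"
  shows "Lambda \<sigma> = {nmat \<beta> r | \<beta> r. lattice_coords \<sigma> \<beta> r}"
  using Lambda_subset_lattice_coords lattice_coords_in_Lambda[OF assms] by blast

lemma nmat_in_Lambda_iff:
  assumes "\<sigma> > 0"
  shows "nmat \<beta> r \<in> Lambda \<sigma> \<longleftrightarrow> lattice_coords \<sigma> \<beta> r"
  unfolding Lambda_eq[OF assms] by (auto simp: nmat_eq_iff)

section \<open>Normalizers of the lattice\<close>

lemma lattice_coords_shift_iff:
  assumes "lattice_coords \<sigma> \<beta> r"
  shows "lattice_coords \<sigma> \<beta> (r + 2 * s) \<longleftrightarrow> real \<sigma> * s \<in> \<int>"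
proof -
  have split: "real \<sigma> * (r + 2 * s - Re \<beta> * Im \<beta>) / 2 = real \<sigma> * (r - Re \<beta> * Im \<beta>) / 2 + real \<sigma> * s"
    by (simp add: field_simps)
  have "real \<sigma> * (r - Re \<beta> * Im \<beta>) / 2 \<in> \<int>"
    using assms unfolding lattice_coords_def by blast
  then show ?thesis
    using assms unfolding lattice_coords_def split
    by (metis Ints_add Ints_diff add_diff_cancel_left')
qed

lemma ball_Lambda_iff:
  assumes "\<sigma> > 0"
  shows "(\<forall>x\<in>Lambda \<sigma>. P x) \<longleftrightarrow> (\<forall>\<beta> r. lattice_coords \<sigma> \<beta> r \<longrightarrow> P (nmat \<beta> r))"
  unfolding Lambda_eq[OF assms] by blast

lemma nmat_conj_maps_Lambda_iff:
  assumes "\<sigma> > 0"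
  shows "(\<forall>x\<in>Lambda \<sigma>. nmat b \<rho> ** x ** matrix_inv (nmat b \<rho>) \<in> Lambda \<sigma>)
    \<longleftrightarrow> of_nat \<sigma> * b \<in> gauss_ints"
proof -
  have "(\<forall>x\<in>Lambda \<sigma>. nmat b \<rho> ** x ** matrix_inv (nmat b \<rho>) \<in> Lambda \<sigma>)
    \<longleftrightarrow> (\<forall>\<beta> r. lattice_coords \<sigma> \<beta> r \<longrightarrow> real \<sigma> * Im (cnj b * \<beta>) \<in> \<int>)"
    unfolding ball_Lambda_iff[OF assms] nmat_conj_nmat nmat_in_Lambda_iff[OF assms]
    using lattice_coords_shift_iff by blast
  also have "\<dots> \<longleftrightarrow> of_nat \<sigma> * b \<in> gauss_ints"
  proof
    assume "\<forall>\<beta> r. lattice_coords \<sigma> \<beta> r \<longrightarrow> real \<sigma> * Im (cnj b * \<beta>) \<in> \<int>"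
    moreover have "lattice_coords \<sigma> 1 0" "lattice_coords \<sigma> \<i> 0"
      unfolding lattice_coords_def gauss_ints_iff by simp_all
    ultimately have "real \<sigma> * Im (cnj b * 1) \<in> \<int>" "real \<sigma> * Im (cnj b * \<i>) \<in> \<int>"
      by blast+
    then show "of_nat \<sigma> * b \<in> gauss_ints"
      unfolding gauss_ints_iff by simp
  next
    assume "of_nat \<sigma> * b \<in> gauss_ints"
    then have "real \<sigma> * Im (cnj b * \<beta>) \<in> \<int>" if "\<beta> \<in> gauss_ints" for \<beta>
    proof -
      have "real \<sigma> * Im (cnj b * \<beta>) = (real \<sigma> * Re b) * Im \<beta> - (real \<sigma> * Im b) * Re \<beta>"
        by (simp add: algebra_simps)
      also have "\<dots> \<in> \<int>"
        using that \<open>of_nat \<sigma> * b \<in> gauss_ints\<close> unfolding gauss_ints_iff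
        by (simp add: Ints_diff Ints_mult)
      finally show ?thesis .
    qed
    then show "\<forall>\<beta> r. lattice_coords \<sigma> \<beta> r \<longrightarrow> real \<sigma> * Im (cnj b * \<beta>) \<in> \<int>"
      unfolding lattice_coords_def by blast
  qed
  finally show ?thesis .
qed

lemma normalizes_Lambda_nmat_iff:
  assumes "\<sigma> > 0"
  shows "normalizes (Lambda \<sigma>) (nmat b \<rho>) \<longleftrightarrow> of_nat \<sigma> * b \<in> gauss_ints"
proof -
  have "matrix_inv (nmat b \<rho>) ** x ** nmat b \<rho> = nmat (- b) (- \<rho>) ** x ** matrix_inv (nmat (- b) (- \<rho>))"
    for x
    by (simp add: matrix_inv_nmat)
  moreover have "of_nat \<sigma> * - b \<in> gauss_ints \<longleftrightarrow> of_nat \<sigma> * b \<in> gauss_ints"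
    unfolding gauss_ints_iff by simp
  ultimately show ?thesis
    by (simp add: normalizes_iff invertible_nmat nmat_conj_maps_Lambda_iff[OF assms])
qed

lemma normalizer_in_Ngrp_Lambda:
  assumes "\<sigma> > 0"
  shows "normalizer_in Ngrp (Lambda \<sigma>) = {nmat (\<beta> / of_nat \<sigma>) \<rho> | \<beta> \<rho>. \<beta> \<in> gauss_ints}"
proof (intro set_eqI iffI)
  fix p assume "p \<in> normalizer_in Ngrp (Lambda \<sigma>)"
  then obtain b \<rho> where "p = nmat b \<rho>" "of_nat \<sigma> * b \<in> gauss_ints"
    unfolding normalizer_in_iff Ngrp_def using normalizes_Lambda_nmat_iff[OF assms] by blast
  moreover have "p = nmat ((of_nat \<sigma> * b) / of_nat \<sigma>) \<rho>"
    using assms \<open>p = nmat b \<rho>\<close> by simp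
  ultimately show "p \<in> {nmat (\<beta> / of_nat \<sigma>) \<rho> | \<beta> \<rho>. \<beta> \<in> gauss_ints}"
    by blast
next
  fix p assume "p \<in> {nmat (\<beta> / of_nat \<sigma>) \<rho> | \<beta> \<rho>. \<beta> \<in> gauss_ints}"
  then obtain \<beta> \<rho> where "p = nmat (\<beta> / of_nat \<sigma>) \<rho>" "\<beta> \<in> gauss_ints"
    by blast
  moreover have "of_nat \<sigma> * (\<beta> / of_nat \<sigma>) = \<beta>"
    using assms by simp
  ultimately show "p \<in> normalizer_in Ngrp (Lambda \<sigma>)"
    unfolding normalizer_in_iff Ngrp_def using normalizes_Lambda_nmat_iff[OF assms] by auto
qed

lemma lattice_coords_mult_unit:
  assumes "u ^ 4 = 1" "lattice_coords \<sigma> \<beta> r"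
  shows "lattice_coords \<sigma> (u * \<beta>) r"
proof -
  have "u \<in> {1, -1, \<i>, -\<i>}"
    using assms(1) complex_fourth_roots_of_unity by blast
  then have gauss: "u * \<beta> \<in> gauss_ints \<longleftrightarrow> \<beta> \<in> gauss_ints"
    and "Re (u * \<beta>) * Im (u * \<beta>) = Re \<beta> * Im \<beta> \<or> Re (u * \<beta>) * Im (u * \<beta>) = - (Re \<beta> * Im \<beta>)"
    unfolding gauss_ints_iff by auto
  then consider (same) "Re (u * \<beta>) * Im (u * \<beta>) = Re \<beta> * Im \<beta>"
    | (opposite) "Re (u * \<beta>) * Im (u * \<beta>) = - (Re \<beta> * Im \<beta>)"
    by blast
  then have "real \<sigma> * (r - Re (u * \<beta>) * Im (u * \<beta>)) / 2 \<in> \<int>"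
  proof cases
    case same
    then show ?thesis
      using assms(2) unfolding lattice_coords_def by simp
  next
    case opposite
    have "real \<sigma> * (r - Re (u * \<beta>) * Im (u * \<beta>)) / 2
        = real \<sigma> * (r - Re \<beta> * Im \<beta>) / 2 + real \<sigma> * Re \<beta> * Im \<beta>"
      unfolding opposite by (simp add: field_simps)
    also have "\<dots> \<in> \<int>"
      using assms(2) unfolding lattice_coords_def gauss_ints_iff by (simp add: Ints_add Ints_mult)
    finally show ?thesis .
  qed
  with gauss assms(2) show ?thesis
    unfolding lattice_coords_def by blast
qed

lemma mmat_conj_maps_Lambda:
  assumes "\<sigma> > 0" "cmod z = 1" "z ^ 12 = 1" "x \<in> Lambda \<sigma>"
  shows "mmat z ** x ** matrix_inv (mmat z) \<in> Lambda \<sigma>"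
proof -
  obtain \<beta> r where "x = nmat \<beta> r" "lattice_coords \<sigma> \<beta> r"
    using assms(4) unfolding Lambda_eq[OF assms(1)] by blast
  moreover have "(z ^ 3) ^ 4 = 1"
    using assms(3) by (simp flip: power_mult)
  ultimately show ?thesis
    by (simp add: mmat_conj_nmat assms(2) nmat_in_Lambda_iff[OF assms(1)] lattice_coords_mult_unit)
qed

lemma normalizes_Lambda_mmat:
  assumes "\<sigma> > 0" "cmod z = 1" "z ^ 12 = 1"
  shows "normalizes (Lambda \<sigma>) (mmat z)"
proof -
  have "z \<noteq> 0"
    using assms(2) by auto
  have "cmod (1 / z) = 1" "(1 / z) ^ 12 = 1"
    using assms by (simp_all add: norm_divide power_one_over)
  moreover have "matrix_inv (mmat z) ** x ** mmat z = mmat (1 / z) ** x ** matrix_inv (mmat (1 / z))" for x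
    using \<open>z \<noteq> 0\<close> by (simp add: matrix_inv_mmat)
  ultimately show ?thesis
    using assms \<open>z \<noteq> 0\<close> by (simp add: normalizes_iff invertible_mmat mmat_conj_maps_Lambda)
qed

lemma normalizes_Lambda_nam:
  assumes "\<sigma> > 0" "t > 0" "cmod z = 1" "normalizes (Lambda \<sigma>) (nmat b \<rho> ** amat t ** mmat z)"
  shows "t = 1 \<and> z ^ 12 = 1"
proof -
  define p where "p = nmat b \<rho> ** amat t ** mmat z"
  define u where "u = of_real t * z ^ 3"
  have conj: "p ** nmat \<beta> r ** matrix_inv p = nmat (u * \<beta>) (t\<^sup>2 * r + 2 * Im (cnj b * (u * \<beta>)))"
    for \<beta> r
    unfolding p_def u_def using nam_conj_nmat[OF assms(2,3)] by (simp add: mult.assoc)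
  have image: "(\<lambda>x. p ** x ** matrix_inv p) ` Lambda \<sigma> = Lambda \<sigma>"
    using assms(4) unfolding normalizes_def p_def .
  have one: "nmat 1 0 \<in> Lambda \<sigma>"
    by (simp add: nmat_in_Lambda_iff[OF assms(1)] lattice_coords_def gauss_ints_iff)
  then have "p ** nmat 1 0 ** matrix_inv p \<in> Lambda \<sigma>"
    using image by blast
  then have "lattice_coords \<sigma> u (2 * Im (cnj b * u))"
    by (simp add: conj nmat_in_Lambda_iff[OF assms(1)])
  then have "u \<in> gauss_ints"
    unfolding lattice_coords_def by blast
  have "nmat 1 0 \<in> (\<lambda>x. p ** x ** matrix_inv p) ` Lambda \<sigma>"
    using one by (simp only: image)
  then obtain x where "x \<in> Lambda \<sigma>" "nmat 1 0 = p ** x ** matrix_inv p"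
    by blast
  then obtain \<beta> r where "lattice_coords \<sigma> \<beta> r" "nmat 1 0 = p ** nmat \<beta> r ** matrix_inv p"
    unfolding Lambda_eq[OF assms(1)] by blast
  then have "\<beta> \<in> gauss_ints" "u * \<beta> = 1"
    by (simp_all add: lattice_coords_def conj nmat_eq_iff)
  with \<open>u \<in> gauss_ints\<close> have "u ^ 4 = 1"
    by (rule gauss_int_unit_fourth_root)
  then have "cmod u ^ 4 = 1 ^ 4"
    by (simp flip: norm_power)
  then have "cmod u = 1"
    by (rule power_eq_imp_eq_base) simp_all
  moreover have "cmod u = t"
    using assms(2,3) by (simp add: u_def norm_mult norm_power)
  ultimately have "t = 1"
    by simp
  with \<open>u ^ 4 = 1\<close> show ?thesis
    by (simp add: u_def flip: power_mult)
qed

lemma normalizer_in_Mgrp_Lambda: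
  assumes "\<sigma> > 0"
  shows "normalizer_in Mgrp (Lambda \<sigma>) = {mmat \<zeta> | \<zeta>. cmod \<zeta> = 1 \<and> \<zeta> ^ 12 = 1}"
proof (intro set_eqI iffI)
  fix p assume "p \<in> normalizer_in Mgrp (Lambda \<sigma>)"
  then obtain z where "p = mmat z" "cmod z = 1" "normalizes (Lambda \<sigma>) (nmat 0 0 ** amat 1 ** mmat z)"
    unfolding normalizer_in_iff Mgrp_def by (auto simp: nmat_zero amat_one matrix_mul_lid)
  moreover from this(2,3) have "z ^ 12 = 1"
    using normalizes_Lambda_nam[OF assms zero_less_one] by blast
  ultimately show "p \<in> {mmat \<zeta> | \<zeta>. cmod \<zeta> = 1 \<and> \<zeta> ^ 12 = 1}"
    by blast
next
  fix p assume "p \<in> {mmat \<zeta> | \<zeta>. cmod \<zeta> = 1 \<and> \<zeta> ^ 12 = 1}"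
  with normalizes_Lambda_mmat[OF assms] show "p \<in> normalizer_in Mgrp (Lambda \<sigma>)"
    unfolding normalizer_in_iff Mgrp_def by auto
qed

lemma normalizer_in_Ngrp_mult_Mgrp:
  assumes "x \<in> normalizer_in Ngrp L" "y \<in> normalizer_in Mgrp L"
  shows "x ** y \<in> normalizer_in Pgrp L"
proof -
  obtain b \<rho> z where "x = nmat b \<rho>" "y = mmat z" "cmod z = 1"
    using assms unfolding normalizer_in_iff Ngrp_def Mgrp_def by blast
  then have "x ** y = nmat b \<rho> ** amat 1 ** mmat z"
    by (simp add: amat_one matrix_mul_rid)
  with \<open>cmod z = 1\<close> have "x ** y \<in> Pgrp"
    unfolding Pgrp_def Ngrp_def Agrp_def Mgrp_def by fastforce
  moreover have "invertible x" "invertible y"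
    using assms Ngrp_subset_Pgrp Mgrp_subset_Pgrp invertible_Pgrp by (auto simp: normalizer_in_iff)
  ultimately show ?thesis
    using assms by (simp add: normalizer_in_iff normalizes_mult)
qed

lemma normalizer_in_Pgrp_Lambda:
  assumes "\<sigma> > 0"
  shows "normalizer_in Pgrp (Lambda \<sigma>)
    = {x ** y | x y. x \<in> normalizer_in Ngrp (Lambda \<sigma>) \<and> y \<in> normalizer_in Mgrp (Lambda \<sigma>)}"
proof (intro set_eqI iffI)
  fix p assume p: "p \<in> normalizer_in Pgrp (Lambda \<sigma>)"
  then obtain b \<rho> t z where p_eq: "p = nmat b \<rho> ** amat t ** mmat z" and "t > 0" "cmod z = 1"
    unfolding normalizer_in_iff Pgrp_def Ngrp_def Agrp_def Mgrp_def by blast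
  with p have "t = 1" "z ^ 12 = 1"
    using normalizes_Lambda_nam[OF assms] by (auto simp: normalizer_in_iff)
  then have p_eq': "p = nmat b \<rho> ** mmat z"
    by (simp add: p_eq amat_one matrix_mul_rid)
  have m: "mmat z \<in> normalizer_in Mgrp (Lambda \<sigma>)"
    using normalizer_in_Mgrp_Lambda[OF assms] \<open>cmod z = 1\<close> \<open>z ^ 12 = 1\<close> by blast
  have "z \<noteq> 0"
    using \<open>cmod z = 1\<close> by auto
  then have n_eq: "nmat b \<rho> = p ** matrix_inv (mmat z)"
    by (simp add: p_eq' matrix_inv_right invertible_mmat matrix_mul_rid flip: matrix_mul_assoc)
  have "normalizes (Lambda \<sigma>) (nmat b \<rho>)"
    unfolding n_eq using p m \<open>z \<noteq> 0\<close> invertible_Pgrp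
    by (auto simp: normalizer_in_iff invertible_mmat
        intro!: normalizes_mult normalizes_matrix_inv invertible_matrix_inv)
  then have "nmat b \<rho> \<in> normalizer_in Ngrp (Lambda \<sigma>)"
    unfolding normalizer_in_iff Ngrp_def by blast
  with m p_eq' show "p \<in> {x ** y | x y. x \<in> normalizer_in Ngrp (Lambda \<sigma>) \<and> y \<in> normalizer_in Mgrp (Lambda \<sigma>)}"
    by blast
next
  fix p assume "p \<in> {x ** y | x y. x \<in> normalizer_in Ngrp (Lambda \<sigma>) \<and> y \<in> normalizer_in Mgrp (Lambda \<sigma>)}"
  then show "p \<in> normalizer_in Pgrp (Lambda \<sigma>)"
    using normalizer_in_Ngrp_mult_Mgrp by blast
qed

theorem proposition8p5:
  fixes \<sigma> :: nat
  assumes "\<sigma> \<ge> 1"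
  shows "normalizer_in Ngrp (Lambda \<sigma>)
           = {nmat (\<beta> / of_nat \<sigma>) \<rho> | \<beta> \<rho>. \<beta> \<in> gauss_ints}
       \<and> normalizer_in Mgrp (Lambda \<sigma>) = {mmat \<zeta> | \<zeta>. cmod \<zeta> = 1 \<and> \<zeta> ^ 12 = 1}
       \<and> normalizer_in Pgrp (Lambda \<sigma>)
           = {x ** y | x y. x \<in> normalizer_in Ngrp (Lambda \<sigma>) \<and> y \<in> normalizer_in Mgrp (Lambda \<sigma>)}
       \<and> normalizer_in Ngrp (Lambda \<sigma>) \<inter> normalizer_in Mgrp (Lambda \<sigma>) = {mat 1}
       \<and> (\<forall>p \<in> normalizer_in Pgrp (Lambda \<sigma>). \<forall>x \<in> normalizer_in Ngrp (Lambda \<sigma>).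
            p ** x ** matrix_inv p \<in> normalizer_in Ngrp (Lambda \<sigma>))"
proof -
  have "\<sigma> > 0"
    using assms by simp
  have "normalizer_in Ngrp (Lambda \<sigma>) \<inter> normalizer_in Mgrp (Lambda \<sigma>) = {mat 1}"
    unfolding normalizer_in_Int Ngrp_Int_Mgrp normalizer_in_one ..
  with \<open>\<sigma> > 0\<close> show ?thesis
    by (intro conjI ballI normalizer_in_Ngrp_conj normalizer_in_Ngrp_Lambda normalizer_in_Mgrp_Lambda
        normalizer_in_Pgrp_Lambda)
qed

end
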